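(* In the Standing Setup with $R=-v(X-w)$ ($v,w\in\mathbb F$), for every $h\in\mathbb Z$: $$d_{h-1}d_h^2d_{h+1}^2d_{h+2}=v^2\bigl(w_h-wv_h+w^2\bigr).$$
   Context: Standing Setup. $\mathbb F$ is a field of characteristic not $2$ or $3$; $f,g\in\mathbb F$; $A=X^3+fX+g\in\mathbb F[X]$; $R\in\mathbb F[X]$ is a polynomial of degree at most $2$; $D=A^2+4R$; $Y$ satisfies $Y^2=D(X)$, $Z=\tfrac12(Y+A)$ and $\overline Z=\tfrac12(-Y+A)$, so $Z+\overline Z=A$ and $Z\overline Z=-R$. We are given sequences $(u_h),(v_h),(w_h),(d_h),(e_h)$ of elements of $\mathbb F$ indexed by $h\in\mathbb Z$, with all $u_h\neq0$, such that for every $h\in\mathbb Z$ the following two identities hold in $\mathbb F[X]$: (i) $A+d_h(X+e_h)+d_{h+1}(X+e_{h+1})=(X+v_h)(X^2-v_hX+w_h)$; (ii) $-u_hu_{h+1}(X^2-v_hX+w_h)(X^2-v_{h+1}X+w_{h+1})=d_{h+1}^2(X+e_{h+1})^2+d_{h+1}(X+e_{h+1})A-R$. (These say that $Z_h=\bigl(Z+d_h(X+e_h)\bigr)/\bigl(u_h(X^2-v_hX+w_h)\bigr)$ are consecutive complete quotients of a continued fraction expansion with partial quotients $(X+v_h)/u_h$.) *)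

theory Defs
  imports "HOL-Computational_Algebra.Polynomial"
begin

definition cubicA :: "'a::field \<Rightarrow> 'a \<Rightarrow> 'a poly" where
  "cubicA f g = [:g, f, 0, 1:]"

end

theory Submission
  imports Defs
begin

text \<open>
  Write P_h = X + e_h and Q_h = X^2 - v_h X + w_h. The X^4-coefficient of (ii) gives
  d_(h+1) = -u_h u_(h+1) \<noteq> 0. Eliminating A from (ii) by means of (i) leaves
  d_(h+1) Q_h (Q_(h+1) - (X + v_h) P_(h+1)) = -d_h d_(h+1) P_h P_(h+1) - R,
  whose right-hand side has degree at most 2. Hence the cofactor of Q_h is the constant -d_h,
  so Q_(h+1) = (X + v_h) P_(h+1) - d_h and d_h d_(h+1) (P_h P_(h+1) - Q_h) = -R = v (X - w).
  Evaluating the last identity at X = -e_h, where Q_h = -d_(h-1), gives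
  d_(h-1) d_h d_(h+1) = -v (w + e_h); evaluating it at the root X = w of R gives
  Q_h(w) = (w + e_h)(w + e_(h+1)). Multiplying the triple products at h and h + 1 proves the
  theorem.
\<close>

lemma norm_relation_leading_coeff:
  fixes A R :: "'a::field poly"
  assumes norm_rel: "- smult N ([:c, - b, 1:] * [:c', - b', 1:])
                     = smult (d\<^sup>2) ([:e, 1:]\<^sup>2) + smult d [:e, 1:] * A - R"
    and deg_A: "degree A = 3" and monic_A: "lead_coeff A = 1" and deg_R: "degree R \<le> 3"
  shows "d = - N"
proof -
  have "coeff A 4 = 0" "coeff R 4 = 0"
    using deg_A deg_R by (simp_all add: coeff_eq_0)
  moreover have "coeff A 3 = 1"
    using deg_A monic_A by simp
  moreover have "coeff (- smult N ([:c, - b, 1:] * [:c', - b', 1:])) 4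
               = coeff (smult (d\<^sup>2) ([:e, 1:]\<^sup>2) + smult d [:e, 1:] * A - R) 4"
    using norm_rel by simp
  ultimately show ?thesis
    by (simp add: power2_eq_square numeral_eq_Suc)
qed

lemma consecutive_quotient_relations:
  fixes A R :: "'a::field poly"
  assumes rel_i: "A + smult d [:e, 1:] + smult d' [:e', 1:] = [:b, 1:] * [:c, - b, 1:]"
    and rel_ii: "smult d' ([:c, - b, 1:] * [:c', - b', 1:])
                 = smult (d'\<^sup>2) ([:e', 1:]\<^sup>2) + smult d' [:e', 1:] * A - R"
    and d'_nz: "d' \<noteq> 0" and deg_R: "degree R \<le> 1"
  shows "[:c', - b', 1:] = [:e', 1:] * [:b, 1:] - [:d:]"
    and "smult (d * d') ([:e, 1:] * [:e', 1:] - [:c, - b, 1:]) = - R"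
proof -
  define P P' a Q Q' where "P = [:e, 1:]" and "P' = [:e', 1:]" and "a = [:b, 1:]"
    and "Q = [:c, - b, 1:]" and "Q' = [:c', - b', 1:]"
  define L where "L = Q' - P' * a"
  have A_eq: "A - a * Q = - smult d P - smult d' P'"
    unfolding P_def P'_def a_def Q_def rel_i[symmetric] by simp
  have "smult d' (Q * L) = smult d' (Q * Q') - smult d' P' * (a * Q)"
    by (simp add: L_def algebra_simps smult_diff_right)
  also have "\<dots> = smult d' P' * (A - a * Q) + smult (d'\<^sup>2) (P'\<^sup>2) - R"
    using rel_ii unfolding P_def P'_def a_def Q_def Q'_def by (simp add: algebra_simps)
  also have "\<dots> = - smult (d * d') (P * P') - R"
    unfolding A_eq by (simp add: algebra_simps power2_eq_square)
  finally have eliminated: "smult d' (Q * L) = - smult (d * d') (P * P') - R" .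
  have "degree (- smult (d * d') (P * P') - R) \<le> 2"
    using deg_R degree_mult_le[of P P'] unfolding P_def P'_def
    by (intro degree_diff_le) auto
  then have "degree (Q * L) \<le> 2"
    using eliminated d'_nz by (metis degree_smult_eq)
  \<comment> \<open>the quadratic \<open>Q\<close> divides a polynomial of degree at most 2, so the cofactor is constant\<close>
  then have "degree L = 0"
    using degree_mult_eq[of Q L] by (cases "L = 0") (auto simp: Q_def)
  then have L_const: "L = [:coeff L 0:]"
    by (rule degree_0_id[symmetric])
  have "coeff (smult d' (Q * L)) 2 = coeff (- smult (d * d') (P * P') - R) 2"
    using eliminated by simp
  then have "d' * coeff L 0 = d' * - d"
    using deg_R by (subst (asm) L_const) (simp add: P_def P'_def Q_def coeff_eq_0 numeral_eq_Suc)
  then have "coeff L 0 = - d"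
    using d'_nz by (metis mult_left_cancel)
  then have L_eq: "L = [:- d:]"
    using L_const by metis
  then show "[:c', - b', 1:] = [:e', 1:] * [:b, 1:] - [:d:]"
    unfolding L_def P'_def a_def Q'_def by (simp add: algebra_simps)
  have "smult (d * d') (P * P' - Q) = smult (d * d') (P * P') + smult d' (Q * L)"
    unfolding L_eq by (simp add: smult_diff_right algebra_simps)
  also have "\<dots> = - R"
    unfolding eliminated by simp
  finally show "smult (d * d') ([:e, 1:] * [:e', 1:] - [:c, - b, 1:]) = - R"
    unfolding P_def P'_def Q_def .
qed

lemma degree_cubicA: "degree (cubicA f g) = 3"
  and lead_coeff_cubicA: "lead_coeff (cubicA f g) = 1"
  by (simp_all add: cubicA_def)

lemma quotient_sequence_relations:
  fixes A R :: "'a::field poly" and u b c d e :: "int \<Rightarrow> 'a"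
  assumes deg_A: "degree A = 3" and monic_A: "lead_coeff A = 1" and deg_R: "degree R \<le> 1"
    and u_nz: "\<And>h. u h \<noteq> 0"
    and rel_i: "\<And>h. A + smult (d h) [:e h, 1:] + smult (d (h + 1)) [:e (h + 1), 1:]
                  = [:b h, 1:] * [:c h, - b h, 1:]"
    and rel_ii: "\<And>h. - smult (u h * u (h + 1)) ([:c h, - b h, 1:] * [:c (h + 1), - b (h + 1), 1:])
                  = smult ((d (h + 1))\<^sup>2) ([:e (h + 1), 1:]\<^sup>2) + smult (d (h + 1)) [:e (h + 1), 1:] * A - R"
  shows "d k \<noteq> 0"
    and "[:c (k + 1), - b (k + 1), 1:] = [:e (k + 1), 1:] * [:b k, 1:] - [:d k:]"
    and "smult (d k * d (k + 1)) ([:e k, 1:] * [:e (k + 1), 1:] - [:c k, - b k, 1:]) = - R"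
proof -
  have d_succ: "d (h + 1) = - (u h * u (h + 1))" for h
    using deg_R by (intro norm_relation_leading_coeff[OF rel_ii deg_A monic_A]) simp
  have d_nz: "d h \<noteq> 0" for h
    using d_succ[of "h - 1"] u_nz by simp
  then show "d k \<noteq> 0" .
  have "smult (d (k + 1)) ([:c k, - b k, 1:] * [:c (k + 1), - b (k + 1), 1:])
      = smult ((d (k + 1))\<^sup>2) ([:e (k + 1), 1:]\<^sup>2) + smult (d (k + 1)) [:e (k + 1), 1:] * A - R"
    using rel_ii[of k] unfolding d_succ by simp
  note relations = consecutive_quotient_relations[OF rel_i this d_nz deg_R]
  show "[:c (k + 1), - b (k + 1), 1:] = [:e (k + 1), 1:] * [:b k, 1:] - [:d k:]"
    by (rule relations(1))
  show "smult (d k * d (k + 1)) ([:e k, 1:] * [:e (k + 1), 1:] - [:c k, - b k, 1:]) = - R"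
    by (rule relations(2))
qed

lemma denominator_triple_product:
  fixes R :: "'a::field poly"
  assumes Q_eq: "[:c, - b, 1:] = [:e, 1:] * [:b\<^sub>0, 1:] - [:d\<^sub>0:]"
    and cross: "smult (d * d') ([:e, 1:] * [:e', 1:] - [:c, - b, 1:]) = - R"
  shows "d\<^sub>0 * d * d' = - poly R (- e)"
proof -
  have "poly [:c, - b, 1:] (- e) = - d\<^sub>0"
    using arg_cong[OF Q_eq, of "\<lambda>p. poly p (- e)"] by simp
  then show ?thesis
    using arg_cong[OF cross, of "\<lambda>p. poly p (- e)"] by simp algebra
qed

lemma quotient_value_at_root:
  fixes R :: "'a::field poly"
  assumes cross: "smult (d * d') ([:e, 1:] * [:e', 1:] - [:c, - b, 1:]) = - R"
    and d_nz: "d \<noteq> 0" and d'_nz: "d' \<noteq> 0" and root: "poly R r = 0"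
  shows "poly [:c, - b, 1:] r = poly [:e, 1:] r * poly [:e', 1:] r"
proof -
  have "d * d' * (poly [:e, 1:] r * poly [:e', 1:] r - poly [:c, - b, 1:] r) = 0"
    using arg_cong[OF cross, of "\<lambda>p. poly p r"] root
    by (simp only: poly_smult poly_diff poly_mult poly_minus) simp
  then show ?thesis
    using d_nz d'_nz by simp
qed

theorem mainTheorem8:
  fixes f g v w :: "'a::field"
    and u vv ww d e :: "int \<Rightarrow> 'a"
    and R :: "'a poly"
  assumes char2: "(2::'a) \<noteq> 0"
    and char3: "(3::'a) \<noteq> 0"
    and R_def: "R = - smult v ([:0, 1:] - [:w:])"
    and u_nz: "\<And>h. u h \<noteq> 0"
    and rel_i: "\<And>h. cubicA f g + smult (d h) [:e h, 1:] + smult (d (h + 1)) [:e (h + 1), 1:]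
                  = [:vv h, 1:] * [:ww h, - vv h, 1:]"
    and rel_ii: "\<And>h. - smult (u h * u (h + 1)) ([:ww h, - vv h, 1:] * [:ww (h + 1), - vv (h + 1), 1:])
                  = smult ((d (h + 1))\<^sup>2) ([:e (h + 1), 1:]\<^sup>2)
                    + smult (d (h + 1)) [:e (h + 1), 1:] * cubicA f g - R"
  shows "d (h - 1) * (d h)\<^sup>2 * (d (h + 1))\<^sup>2 * d (h + 2) = v\<^sup>2 * (ww h - w * vv h + w\<^sup>2)"
proof -
  have "degree R \<le> 1"
    unfolding R_def by (simp add: degree_diff_le)
  note relations = quotient_sequence_relations[where b = vv and c = ww and d = d and e = e,
      OF degree_cubicA lead_coeff_cubicA this u_nz rel_i rel_ii]
  have triple: "d (k - 1) * d k * d (k + 1) = - v * (w + e k)" for k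
    using denominator_triple_product[OF relations(2)[of "k - 1", unfolded diff_add_cancel] relations(3)[of k]]
    by (simp add: R_def algebra_simps)
  have Q_at_w: "ww h - w * vv h + w\<^sup>2 = (w + e h) * (w + e (h + 1))"
    using quotient_value_at_root[OF relations(3)[of h] relations(1) relations(1), where r = w]
    by (simp add: R_def algebra_simps power2_eq_square)
  have "d (h - 1) * (d h)\<^sup>2 * (d (h + 1))\<^sup>2 * d (h + 2)
      = (d (h - 1) * d h * d (h + 1)) * (d (h + 1 - 1) * d (h + 1) * d (h + 1 + 1))"
    by (simp add: power2_eq_square algebra_simps)
  also have "\<dots> = v\<^sup>2 * ((w + e h) * (w + e (h + 1)))"
    unfolding triple by (simp add: power2_eq_square algebra_simps)
  finally show ?thesis
    unfolding Q_at_w .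
qed

end
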